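(* Let $Q_k^A,Q_k^B$ be the SDQ iterates and $w_k^A,w_k^B$ the associated noise vectors (see context). Define the lower comparison system \[ Q_{k+1}^{A_L}-Q^*=(I+\alpha\gamma DP\Pi_{Q^*}-\alpha D)(Q_k^{A_L}-Q^* )+\alpha\gamma DP(\Pi_{Q_k^B}-\Pi_{Q^*})(Q_k^A-Q_k^B)+\alpha w_k^A, \] \[ Q_{k+1}^{B_L}-Q^*=(I+\alpha\gamma DP\Pi_{Q^*}-\alpha D)(Q_k^{B_L}-Q^* )+\alpha\gamma DP(\Pi_{Q^*}-\Pi_{Q_k^A})(Q_k^A-Q_k^B)+\alpha w_k^B, \] with arbitrary initial vectors $Q_0^{A_L},Q_0^{B_L}\in\mathbb{R}^{|\mathcal{S}||\mathcal{A}|}$. Suppose $Q_0^{A_L}-Q^*\le Q_0^A-Q^*$ and $Q_0^{B_L}-Q^*\le Q_0^B-Q^*$ element-wise. Then for all $k\ge0$, $Q_k^{A_L}-Q^*\le Q_k^A-Q^*$ and $Q_k^{B_L}-Q^*\le Q_k^B-Q^*$ element-wise.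
   Context: Finite MDP with states $\mathcal{S}=\{1,\dots,|\mathcal{S}|\}$, actions $\mathcal{A}=\{1,\dots,|\mathcal{A}|\}$, transitions $P(s'|s,a)$, bounded deterministic reward $r(s,a,s')$, discount $\gamma\in(0,1)$, optimal action-value function $Q^*$. Sampling distribution $d(s,a)>0$ on $\mathcal{S}\times\mathcal{A}$; at iteration $k$, $(s_k,a_k)\sim d$ i.i.d., $s_k'\sim P(\cdot|s_k,a_k)$, $r_{k+1}=r(s_k,a_k,s_k')$. Constant step-size $\alpha\in(0,1)$. SDQ: only entry $(s_k,a_k)$ is updated, $Q_{k+1}^A(s_k,a_k)=Q_k^A(s_k,a_k)+\alpha\{r_{k+1}+\gamma Q_k^A(s_k',\arg\max_aQ_k^B(s_k',a))-Q_k^A(s_k,a_k)\}$ and symmetrically for $B$ with roles of $A,B$ swapped. Vector notation: $Q\in\mathbb{R}^{|\mathcal{S}||\mathcal{A}|}$ stacks $Q(\cdot,1),\dots,Q(\cdot,|\mathcal{A}|)$, so $Q(s,a)=(e_a\otimes e_s)^TQ$. $D$ is the diagonal matrix with entry $d(s,a)$ at position $(s,a)$. $P\in\mathbb{R}^{|\mathcal{S}||\mathcal{A}|\times|\mathcal{S}|}$ has row $(s,a)$ equal to $P(\cdot|s,a)$. $R(s,a)=\mathbb{E}[r(s,a,s')|s,a]$. For $Q$, $\pi_Q(s)=\arg\max_aQ(s,a)$ (fixed tie-breaking) and $\Pi_Q\in\mathbb{R}^{|\mathcal{S}|\times|\mathcal{S}||\mathcal{A}|}$ has $s$-th row $e_{\pi_Q(s)}^T\otimes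 e_s^T$. Noise: $w_k^A=(e_{a_k}\otimes e_{s_k})r_{k+1}+\gamma(e_{a_k}\otimes e_{s_k})e_{s_k'}^T\Pi_{Q_k^B}Q_k^A-(e_{a_k}\otimes e_{s_k})(e_{a_k}\otimes e_{s_k})^TQ_k^A-(DR+\gamma DP\Pi_{Q_k^B}Q_k^A-DQ_k^A)$, and $w_k^B$ is the same with $A$ and $B$ swapped. Inequalities between vectors are element-wise. *)

theory Defs
  imports "HOL-Analysis.Analysis"
begin

text \<open>Vectors in R^(|S||A|) are represented as functions 's => 'a => real
  (entry (s,a)); vectors in R^|S| as functions 's => real. Element-wise
  inequality is the pointwise order on functions.\<close>

definition Dop :: "('s \<Rightarrow> 'a \<Rightarrow> real) \<Rightarrow> ('s \<Rightarrow> 'a \<Rightarrow> real) \<Rightarrow> ('s \<Rightarrow> 'a \<Rightarrow> real)" where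
  "Dop d x = (\<lambda>s a. d s a * x s a)"

text \<open>Transition matrix P: (P v)(s,a) = sum_{s'} P(s'|s,a) v(s'); here P s a s' = P(s'|s,a).\<close>
definition Pop :: "('s::finite \<Rightarrow> 'a \<Rightarrow> 's \<Rightarrow> real) \<Rightarrow> ('s \<Rightarrow> real) \<Rightarrow> ('s \<Rightarrow> 'a \<Rightarrow> real)" where
  "Pop P v = (\<lambda>s a. \<Sum>s'\<in>UNIV. P s a s' * v s')"

text \<open>Matrix Pi_Q for the greedy policy pi_Q: (Pi_Q x)(s) = x(s, pi_Q(s)).\<close>
definition Piop :: "('s \<Rightarrow> 'a) \<Rightarrow> ('s \<Rightarrow> 'a \<Rightarrow> real) \<Rightarrow> ('s \<Rightarrow> real)" where
  "Piop pol x = (\<lambda>s. x s (pol s))"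

definition Rexp :: "('s::finite \<Rightarrow> 'a \<Rightarrow> 's \<Rightarrow> real) \<Rightarrow> ('s \<Rightarrow> 'a \<Rightarrow> 's \<Rightarrow> real) \<Rightarrow> ('s \<Rightarrow> 'a \<Rightarrow> real)" where
  "Rexp P r = (\<lambda>s a. \<Sum>s'\<in>UNIV. P s a s' * r s a s')"

definition Qstar :: "('s::finite \<Rightarrow> 'a::finite \<Rightarrow> 's \<Rightarrow> real) \<Rightarrow> ('s \<Rightarrow> 'a \<Rightarrow> 's \<Rightarrow> real) \<Rightarrow> real \<Rightarrow> ('s \<Rightarrow> 'a \<Rightarrow> real)" where
  "Qstar P r \<gamma> = (THE Q. \<forall>s a. Q s a = Rexp P r s a + \<gamma> * (\<Sum>s'\<in>UNIV. P s a s' * Max (range (Q s'))))"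

text \<open>Noise vector w_k for an update of table X whose greedy action is taken
  from table Y (w^A: X = Q^A, Y = Q^B; w^B: X = Q^B, Y = Q^A), at sample (sk,ak,sk').\<close>
definition noise :: "('s::finite \<Rightarrow> 'a \<Rightarrow> real) \<Rightarrow> ('s \<Rightarrow> 'a \<Rightarrow> 's \<Rightarrow> real) \<Rightarrow> ('s \<Rightarrow> 'a \<Rightarrow> 's \<Rightarrow> real)
    \<Rightarrow> real \<Rightarrow> (('s \<Rightarrow> 'a \<Rightarrow> real) \<Rightarrow> 's \<Rightarrow> 'a) \<Rightarrow> 's \<Rightarrow> 'a \<Rightarrow> 's
    \<Rightarrow> ('s \<Rightarrow> 'a \<Rightarrow> real) \<Rightarrow> ('s \<Rightarrow> 'a \<Rightarrow> real) \<Rightarrow> ('s \<Rightarrow> 'a \<Rightarrow> real)" where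
  "noise d P r \<gamma> greedy sk ak sk' X Y = (\<lambda>s a.
     (if s = sk \<and> a = ak then r sk ak sk' + \<gamma> * X sk' (greedy Y sk') - X sk ak else 0)
     - (Dop d (Rexp P r) s a + \<gamma> * Dop d (Pop P (Piop (greedy Y) X)) s a - Dop d X s a))"

definition sdq_step :: "real \<Rightarrow> real \<Rightarrow> ('s \<Rightarrow> 'a \<Rightarrow> 's \<Rightarrow> real) \<Rightarrow> (('s \<Rightarrow> 'a \<Rightarrow> real) \<Rightarrow> 's \<Rightarrow> 'a)
    \<Rightarrow> 's \<Rightarrow> 'a \<Rightarrow> 's \<Rightarrow> ('s \<Rightarrow> 'a \<Rightarrow> real) \<Rightarrow> ('s \<Rightarrow> 'a \<Rightarrow> real) \<Rightarrow> ('s \<Rightarrow> 'a \<Rightarrow> real)" where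
  "sdq_step \<alpha> \<gamma> r greedy sk ak sk' X Y = (\<lambda>s a.
     if s = sk \<and> a = ak
     then X sk ak + \<alpha> * (r sk ak sk' + \<gamma> * X sk' (greedy Y sk') - X sk ak)
     else X s a)"

end

theory Submission
  imports Defs
begin

text \<open>Subtracting the comparison step from the SDQ step, the sampled reward and the noise cancel,
  and the Bellman optimality equation \<open>R = Q\<^sup>* - \<gamma> P \<Pi>\<^sub>Q\<^sub>* Q\<^sup>*\<close> turns the gap
  \<open>E\<^sub>k = Q\<^sup>A\<^sub>k - Q\<^sup>A\<^sup>L\<^sub>k\<close> into
  \<open>E\<^sub>k\<^sub>+\<^sub>1 = (I - \<alpha>D) E\<^sub>k + \<alpha>\<gamma>DP (\<Pi>\<^sub>Q\<^sub>* E\<^sub>k + \<Pi>\<^sub>Q\<^sub>B Q\<^sup>B\<^sub>k - \<Pi>\<^sub>Q\<^sub>* Q\<^sup>B\<^sub>k)\<close>.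
  Every term is nonnegative once \<open>E\<^sub>k\<close> is, since \<open>\<alpha> d \<le> 1\<close>, \<open>P \<ge> 0\<close> and the greedy action
  maximises \<open>Q\<^sup>B\<^sub>k\<close>; the \<open>B\<close> system is symmetric, and induction on \<open>k\<close> concludes.
  Because \<open>Q\<^sup>*\<close> is given by a definite description, the Bellman equation itself must be proved:
  the optimality operator is monotone and a \<open>\<gamma>\<close>-contraction in the sup norm, so it has exactly one
  fixpoint, obtained as the pointwise supremum of its post-fixpoints inside an invariant box.\<close>

lemma mono_fixpoint_exists_bounded:
  fixes f :: "('i \<Rightarrow> real) \<Rightarrow> 'i \<Rightarrow> real"
  assumes "mono f" and "L \<le> f L" and "L \<le> U" and "\<And>x. x \<le> U \<Longrightarrow> f x \<le> U"
  shows "\<exists>x. f x = x"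
proof -
  define S where "S = {x. x \<le> f x \<and> x \<le> U}"
  define h where "h = (\<lambda>i. SUP x\<in>S. x i)"
  have "L \<in> S"
    using assms(2,3) by (simp add: S_def)
  have bdd: "bdd_above ((\<lambda>x. x i) ` S)" for i
    by (rule bdd_aboveI[where M = "U i"]) (auto simp: S_def le_fun_def)
  have upper: "x \<le> h" if "x \<in> S" for x
    unfolding le_fun_def h_def using that bdd by (auto intro: cSUP_upper)
  have "h \<le> U"
    unfolding le_fun_def h_def using \<open>L \<in> S\<close> by (auto simp: S_def le_fun_def intro!: cSUP_least)
  have "h \<le> f h"
  proof -
    have "x i \<le> f h i" if "x \<in> S" for x i
    proof -
      have "x \<le> f x" using that by (simp add: S_def)
      also have "f x \<le> f h" using \<open>mono f\<close> upper[OF that] by (rule monoD)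
      finally show ?thesis by (simp add: le_fun_def)
    qed
    then show ?thesis
      unfolding le_fun_def h_def using \<open>L \<in> S\<close> by (blast intro: cSUP_least)
  qed
  then have "f h \<in> S"
    using \<open>mono f\<close> assms(4)[OF \<open>h \<le> U\<close>] by (simp add: S_def monoD)
  then have "f h \<le> h"
    by (rule upper)
  with \<open>h \<le> f h\<close> show ?thesis
    by (blast intro: order_antisym)
qed

lemma Max_range_mono:
  fixes f g :: "'a::finite \<Rightarrow> 'b::linorder"
  assumes "\<And>u. f u \<le> g u"
  shows "Max (range f) \<le> Max (range g)"
proof -
  have "f u \<le> Max (range g)" for u
  proof -
    have "g u \<le> Max (range g)" by simp
    with assms[of u] show ?thesis by (rule order_trans)
  qed
  then show ?thesis by simp
qed

lemma Max_range_abs_diff_le: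
  fixes f g :: "'a::finite \<Rightarrow> real"
  assumes "\<And>u. \<bar>f u - g u\<bar> \<le> m"
  shows "\<bar>Max (range f) - Max (range g)\<bar> \<le> m"
proof -
  have fg: "f u \<le> g u + m" and gf: "g u \<le> f u + m" for u
    using assms[of u] by linarith+
  have "Max (range f) \<le> Max (range (\<lambda>u. g u + m))" "Max (range g) \<le> Max (range (\<lambda>u. f u + m))"
    by (rule Max_range_mono[OF fg], rule Max_range_mono[OF gf])
  then show ?thesis
    by (simp only: Max_add_commute[OF finite UNIV_not_empty])
qed

lemma Pop_mono:
  assumes "\<And>y. 0 \<le> P x u y" and "\<And>y. v y \<le> w y"
  shows "Pop P v x u \<le> Pop P w x u"
  unfolding Pop_def using assms by (intro sum_mono mult_left_mono) auto

lemma Pop_add_const: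
  assumes "(\<Sum>y\<in>UNIV. P x u y) = 1"
  shows "Pop P (\<lambda>y. v y + c) x u = Pop P v x u + c"
  using assms by (simp add: Pop_def distrib_left sum.distrib flip: sum_distrib_right)

lemma Pop_const:
  assumes "(\<Sum>y\<in>UNIV. P x u y) = 1"
  shows "Pop P (\<lambda>y. c) x u = c"
  using assms by (simp add: Pop_def flip: sum_distrib_right)

lemma Pop_abs_diff_le:
  assumes "\<And>y. 0 \<le> P x u y" and "(\<Sum>y\<in>UNIV. P x u y) = 1" and "\<And>y. \<bar>v y - w y\<bar> \<le> m"
  shows "\<bar>Pop P v x u - Pop P w x u\<bar> \<le> m"
proof -
  have "v y \<le> w y + m" "w y \<le> v y + m" for y
    using assms(3)[of y] by linarith+
  then have "Pop P v x u \<le> Pop P (\<lambda>y. w y + m) x u" "Pop P w x u \<le> Pop P (\<lambda>y. v y + m) x u"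
    using assms(1) by (simp_all add: Pop_mono)
  then have "Pop P v x u \<le> Pop P w x u + m" "Pop P w x u \<le> Pop P v x u + m"
    by (simp_all add: Pop_add_const[of P x u, OF assms(2)])
  then show ?thesis by linarith
qed

definition bellman_opt ::
    "('s::finite \<Rightarrow> 'a::finite \<Rightarrow> 's \<Rightarrow> real) \<Rightarrow> ('s \<Rightarrow> 'a \<Rightarrow> 's \<Rightarrow> real) \<Rightarrow> real
      \<Rightarrow> ('s \<Rightarrow> 'a \<Rightarrow> real) \<Rightarrow> ('s \<Rightarrow> 'a \<Rightarrow> real)" where
  "bellman_opt P r \<gamma> Q = (\<lambda>x u. Rexp P r x u + \<gamma> * Pop P (\<lambda>y. Max (range (Q y))) x u)"

lemma mono_bellman_opt:
  assumes "\<And>x u y. 0 \<le> P x u y" and "0 \<le> \<gamma>"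
  shows "mono (bellman_opt P r \<gamma>)"
proof (rule monoI)
  fix Q Q' :: "'a \<Rightarrow> 'b \<Rightarrow> real"
  assume "Q \<le> Q'"
  then have "Max (range (Q y)) \<le> Max (range (Q' y))" for y
    by (intro Max_range_mono) (simp add: le_fun_def)
  then show "bellman_opt P r \<gamma> Q \<le> bellman_opt P r \<gamma> Q'"
    using assms by (auto simp: le_fun_def bellman_opt_def intro!: mult_left_mono Pop_mono)
qed

lemma bellman_opt_abs_diff_le:
  assumes "\<And>x u y. 0 \<le> P x u y" and "\<And>x u. (\<Sum>y\<in>UNIV. P x u y) = 1" and "0 \<le> \<gamma>"
    and "\<And>x u. \<bar>Q x u - Q' x u\<bar> \<le> m"
  shows "\<bar>bellman_opt P r \<gamma> Q x u - bellman_opt P r \<gamma> Q' x u\<bar> \<le> \<gamma> * m"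
proof -
  have "\<bar>Pop P (\<lambda>y. Max (range (Q y))) x u - Pop P (\<lambda>y. Max (range (Q' y))) x u\<bar> \<le> m"
    using assms by (intro Pop_abs_diff_le Max_range_abs_diff_le) auto
  then have "\<gamma> * \<bar>Pop P (\<lambda>y. Max (range (Q y))) x u - Pop P (\<lambda>y. Max (range (Q' y))) x u\<bar> \<le> \<gamma> * m"
    using \<open>0 \<le> \<gamma>\<close> by (rule mult_left_mono)
  then show ?thesis
    using \<open>0 \<le> \<gamma>\<close> by (simp add: bellman_opt_def abs_mult flip: right_diff_distrib)
qed

lemma bellman_opt_fixpoint_unique:
  assumes "\<And>x u y. 0 \<le> P x u y" and "\<And>x u. (\<Sum>y\<in>UNIV. P x u y) = 1"
    and "0 \<le> \<gamma>" and "\<gamma> < 1"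
    and "bellman_opt P r \<gamma> Q = Q" and "bellman_opt P r \<gamma> Q' = Q'"
  shows "Q = Q'"
proof -
  define m where "m = Max (range (\<lambda>(x, u). \<bar>Q x u - Q' x u\<bar>))"
  have m: "\<bar>Q x u - Q' x u\<bar> \<le> m" for x u
    unfolding m_def by (rule Max_ge) (auto intro: image_eqI[where x = "(x, u)"])
  have "\<bar>bellman_opt P r \<gamma> Q x u - bellman_opt P r \<gamma> Q' x u\<bar> \<le> \<gamma> * m" for x u
    using assms(1-3) m by (rule bellman_opt_abs_diff_le)
  then have "\<bar>Q x u - Q' x u\<bar> \<le> \<gamma> * m" for x u
    by (simp only: assms(5,6))
  then have "m \<le> \<gamma> * m"
    unfolding m_def by (intro Max.boundedI) auto
  then have "m \<le> 0"
    using \<open>\<gamma> < 1\<close> by (simp add: mult_le_cancel_right1)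
  then show ?thesis
    using m by (intro ext) (meson abs_le_zero_iff eq_iff_diff_eq_0 order_trans)
qed

lemma bellman_opt_le_const:
  assumes "\<And>x u y. 0 \<le> P x u y" and "\<And>x u. (\<Sum>y\<in>UNIV. P x u y) = 1" and "0 \<le> \<gamma>"
    and "\<And>x u. Rexp P r x u + \<gamma> * B \<le> B" and "Q \<le> (\<lambda>x u. B)"
  shows "bellman_opt P r \<gamma> Q \<le> (\<lambda>x u. B)"
proof (intro le_funI)
  fix x u
  have "Pop P (\<lambda>y. Max (range (Q y))) x u \<le> Pop P (\<lambda>y. B) x u"
    using assms(5) by (intro Pop_mono assms(1)) (simp add: le_fun_def)
  then have "\<gamma> * Pop P (\<lambda>y. Max (range (Q y))) x u \<le> \<gamma> * B"
    using \<open>0 \<le> \<gamma>\<close> by (simp add: Pop_const assms(2) mult_left_mono)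
  then show "bellman_opt P r \<gamma> Q x u \<le> B"
    using assms(4)[of x u] by (simp add: bellman_opt_def)
qed

lemma bellman_opt_fixpoint_exists:
  fixes P :: "'s::finite \<Rightarrow> 'a::finite \<Rightarrow> 's \<Rightarrow> real"
  assumes "\<And>x u y. 0 \<le> P x u y" and "\<And>x u. (\<Sum>y\<in>UNIV. P x u y) = 1"
    and "0 \<le> \<gamma>" and "\<gamma> < 1"
  shows "\<exists>Q. bellman_opt P r \<gamma> Q = Q"
proof -
  define R where "R = Max (range (\<lambda>(x, u). \<bar>Rexp P r x u\<bar>))"
  define B where "B = R / (1 - \<gamma>)"
  have R: "\<bar>Rexp P r x u\<bar> \<le> R" for x u
    unfolding R_def by (rule Max_ge) (auto intro: image_eqI[where x = "(x, u)"])
  have "R + \<gamma> * B = B" "0 \<le> B"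
    using \<open>\<gamma> < 1\<close> R[of undefined undefined] by (simp_all add: B_def field_simps)
  then have "Rexp P r x u + \<gamma> * B \<le> B" "- B \<le> Rexp P r x u + \<gamma> * (- B)" for x u
    using R[of x u] by (simp_all add: abs_le_iff)
  have bounded: "bellman_opt P r \<gamma> Q \<le> (\<lambda>x u. B)" if "Q \<le> (\<lambda>x u. B)" for Q
    using assms(1-3) \<open>Rexp P r _ _ + \<gamma> * B \<le> B\<close> that by (rule bellman_opt_le_const)
  from \<open>- B \<le> Rexp P r _ _ + \<gamma> * (- B)\<close> have "(\<lambda>x u. - B) \<le> bellman_opt P r \<gamma> (\<lambda>x u. - B)"
    by (simp add: le_fun_def bellman_opt_def Pop_const assms(2))
  define T where "T = (\<lambda>q. case_prod (bellman_opt P r \<gamma> (curry q)))"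
  have "mono (bellman_opt P r \<gamma>)"
    using assms(1,3) by (rule mono_bellman_opt)
  have "mono T"
  proof (rule monoI)
    fix q q' :: "'s \<times> 'a \<Rightarrow> real"
    assume "q \<le> q'"
    then have "bellman_opt P r \<gamma> (curry q) \<le> bellman_opt P r \<gamma> (curry q')"
      by (intro monoD[OF \<open>mono (bellman_opt P r \<gamma>)\<close>]) (simp add: le_fun_def)
    then show "T q \<le> T q'"
      by (simp add: T_def le_fun_def split: prod.split)
  qed
  moreover have "(\<lambda>_. - B) \<le> T (\<lambda>_. - B)"
    using \<open>(\<lambda>x u. - B) \<le> bellman_opt P r \<gamma> (\<lambda>x u. - B)\<close> by (auto simp: T_def le_fun_def curry_def)
  moreover have "T q \<le> (\<lambda>_. B)" if "q \<le> (\<lambda>_. B)" for q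
    using bounded[of "curry q"] that by (auto simp: T_def le_fun_def)
  ultimately obtain q where "T q = q"
    using mono_fixpoint_exists_bounded[of T "\<lambda>_. - B" "\<lambda>_. B"] \<open>0 \<le> B\<close> by (auto simp: le_fun_def)
  then have "bellman_opt P r \<gamma> (curry q) = curry q"
    by (metis T_def curry_case_prod)
  then show ?thesis by blast
qed

lemma bellman_opt_Qstar:
  assumes "\<And>x u y. 0 \<le> P x u y" and "\<And>x u. (\<Sum>y\<in>UNIV. P x u y) = 1"
    and "0 \<le> \<gamma>" and "\<gamma> < 1"
  shows "bellman_opt P r \<gamma> (Qstar P r \<gamma>) = Qstar P r \<gamma>"
proof -
  define bellman_eq where "bellman_eq Q \<longleftrightarrow>
    (\<forall>x u. Q x u = Rexp P r x u + \<gamma> * (\<Sum>y\<in>UNIV. P x u y * Max (range (Q y))))" for Q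
  have bellman_eq_iff: "bellman_eq Q \<longleftrightarrow> bellman_opt P r \<gamma> Q = Q" for Q
  proof -
    have "bellman_eq Q \<longleftrightarrow> (\<forall>x u. Q x u = bellman_opt P r \<gamma> Q x u)"
      by (simp add: bellman_eq_def bellman_opt_def Pop_def)
    then show ?thesis
      unfolding fun_eq_iff by (simp add: eq_commute)
  qed
  have "\<exists>Q. bellman_opt P r \<gamma> Q = Q"
    using assms by (rule bellman_opt_fixpoint_exists)
  then obtain Q where "bellman_opt P r \<gamma> Q = Q" ..
  moreover have "Q' = Q" if "bellman_opt P r \<gamma> Q' = Q'" for Q'
    using assms that \<open>bellman_opt P r \<gamma> Q = Q\<close> by (rule bellman_opt_fixpoint_unique)
  ultimately have "\<exists>!Q. bellman_eq Q"
    unfolding bellman_eq_iff by blast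
  then have "bellman_eq (THE Q. bellman_eq Q)"
    by (rule theI')
  moreover have "Qstar P r \<gamma> = (THE Q. bellman_eq Q)"
    by (simp add: Qstar_def bellman_eq_def)
  ultimately show ?thesis
    by (simp add: bellman_eq_iff)
qed

lemma Qstar_bellman_greedy:
  assumes "\<And>x u y. 0 \<le> P x u y" and "\<And>x u. (\<Sum>y\<in>UNIV. P x u y) = 1"
    and "0 \<le> \<gamma>" and "\<gamma> < 1"
    and "\<And>x u. Qstar P r \<gamma> x u \<le> Qstar P r \<gamma> x (greedy (Qstar P r \<gamma>) x)"
  shows "Qstar P r \<gamma> x u = Rexp P r x u + \<gamma> * Pop P (Piop (greedy (Qstar P r \<gamma>)) (Qstar P r \<gamma>)) x u"
proof -
  have "Max (range (Qstar P r \<gamma> y)) = Qstar P r \<gamma> y (greedy (Qstar P r \<gamma>) y)" for y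
    by (rule Max_eqI) (auto intro: assms(5))
  then have "bellman_opt P r \<gamma> (Qstar P r \<gamma>) x u
      = Rexp P r x u + \<gamma> * Pop P (Piop (greedy (Qstar P r \<gamma>)) (Qstar P r \<gamma>)) x u"
    by (simp add: bellman_opt_def Piop_def)
  then show ?thesis
    by (simp add: bellman_opt_Qstar[OF assms(1-4)])
qed

text \<open>Right-hand side of the lower comparison system, with \<open>(L, X, Y) = (Q\<^sup>A\<^sup>L\<^sub>k, Q\<^sup>A\<^sub>k, Q\<^sup>B\<^sub>k)\<close>
  for the \<open>A\<close> system and \<open>(Q\<^sup>B\<^sup>L\<^sub>k, Q\<^sup>B\<^sub>k, Q\<^sup>A\<^sub>k)\<close> for the \<open>B\<close> system.\<close>

definition sdq_lower_step ::
    "('s::finite \<Rightarrow> 'a \<Rightarrow> real) \<Rightarrow> ('s \<Rightarrow> 'a \<Rightarrow> 's \<Rightarrow> real) \<Rightarrow> ('s \<Rightarrow> 'a \<Rightarrow> 's \<Rightarrow> real)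
      \<Rightarrow> real \<Rightarrow> real \<Rightarrow> (('s \<Rightarrow> 'a \<Rightarrow> real) \<Rightarrow> 's \<Rightarrow> 'a) \<Rightarrow> ('s \<Rightarrow> 'a \<Rightarrow> real)
      \<Rightarrow> 's \<Rightarrow> 'a \<Rightarrow> 's \<Rightarrow> ('s \<Rightarrow> 'a \<Rightarrow> real) \<Rightarrow> ('s \<Rightarrow> 'a \<Rightarrow> real) \<Rightarrow> ('s \<Rightarrow> 'a \<Rightarrow> real)
      \<Rightarrow> ('s \<Rightarrow> 'a \<Rightarrow> real)" where
  "sdq_lower_step d P r \<gamma> \<alpha> greedy q sk ak sk' L X Y = (\<lambda>x u.
     q x u
     + (L x u - q x u)
     + \<alpha> * \<gamma> * Dop d (Pop P (Piop (greedy q) (\<lambda>y v. L y v - q y v))) x u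
     - \<alpha> * Dop d (\<lambda>y v. L y v - q y v) x u
     + \<alpha> * \<gamma> * Dop d (Pop P (\<lambda>y.
           Piop (greedy Y) (\<lambda>z v. X z v - Y z v) y
         - Piop (greedy q) (\<lambda>z v. X z v - Y z v) y)) x u
     + \<alpha> * noise d P r \<gamma> greedy sk ak sk' X Y x u)"

lemma sdq_step_minus_lower_step:
  assumes "\<And>x u. q x u = Rexp P r x u + \<gamma> * Pop P (Piop (greedy q) q) x u"
  shows "sdq_step \<alpha> \<gamma> r greedy sk ak sk' X Y x u - sdq_lower_step d P r \<gamma> \<alpha> greedy q sk ak sk' L X Y x u
    = (1 - \<alpha> * d x u) * (X x u - L x u)
      + \<alpha> * \<gamma> * d x u * Pop P (\<lambda>y. (X y (greedy q y) - L y (greedy q y))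
                                    + (Y y (greedy Y y) - Y y (greedy q y))) x u"
proof -
  have R: "Rexp P r x u = q x u - \<gamma> * (\<Sum>y\<in>UNIV. P x u y * q y (greedy q y))"
    using assms[of x u] unfolding Pop_def Piop_def by linarith
  show ?thesis
    unfolding sdq_step_def sdq_lower_step_def noise_def Dop_def Pop_def Piop_def R
    by (simp add: sum_subtractf sum.distrib algebra_simps)
qed

lemma sdq_lower_step_le_sdq_step:
  assumes "\<And>x u y. 0 \<le> P x u y"
    and "0 \<le> \<alpha>" and "0 \<le> \<gamma>" and "\<And>x u. 0 \<le> d x u" and "\<And>x u. \<alpha> * d x u \<le> 1"
    and "\<And>x u. Y x u \<le> Y x (greedy Y x)"
    and "\<And>x u. q x u = Rexp P r x u + \<gamma> * Pop P (Piop (greedy q) q) x u"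
    and "L \<le> X"
  shows "sdq_lower_step d P r \<gamma> \<alpha> greedy q sk ak sk' L X Y \<le> sdq_step \<alpha> \<gamma> r greedy sk ak sk' X Y"
proof (intro le_funI)
  fix x u
  have "0 \<le> X y v - L y v" for y v
    using \<open>L \<le> X\<close> by (simp add: le_fun_def)
  then have "0 \<le> Pop P (\<lambda>y. (X y (greedy q y) - L y (greedy q y))
                         + (Y y (greedy Y y) - Y y (greedy q y))) x u"
    unfolding Pop_def using assms(1,6) by (intro sum_nonneg mult_nonneg_nonneg add_nonneg_nonneg) auto
  moreover have "0 \<le> (1 - \<alpha> * d x u) * (X x u - L x u)"
    using assms(5) \<open>0 \<le> X x u - L x u\<close> by simp
  ultimately have "0 \<le> sdq_step \<alpha> \<gamma> r greedy sk ak sk' X Y x u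
                      - sdq_lower_step d P r \<gamma> \<alpha> greedy q sk ak sk' L X Y x u"
    using assms(2-4) by (simp add: sdq_step_minus_lower_step[of q P r \<gamma> greedy, OF assms(7)])
  then show "sdq_lower_step d P r \<gamma> \<alpha> greedy q sk ak sk' L X Y x u \<le> sdq_step \<alpha> \<gamma> r greedy sk ak sk' X Y x u"
    by simp
qed

theorem proposition2:
  fixes P :: "'s::finite \<Rightarrow> 'a::finite \<Rightarrow> 's \<Rightarrow> real"
    and r :: "'s \<Rightarrow> 'a \<Rightarrow> 's \<Rightarrow> real"
    and d :: "'s \<Rightarrow> 'a \<Rightarrow> real"
    and \<gamma> \<alpha> :: real
    and greedy :: "('s \<Rightarrow> 'a \<Rightarrow> real) \<Rightarrow> 's \<Rightarrow> 'a"
    and s s' :: "nat \<Rightarrow> 's" and a :: "nat \<Rightarrow> 'a"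
    and QA QB QAL QBL :: "nat \<Rightarrow> 's \<Rightarrow> 'a \<Rightarrow> real"
  assumes P_nonneg: "\<And>x u y. P x u y \<ge> 0"
    and P_sum: "\<And>x u. (\<Sum>y\<in>UNIV. P x u y) = 1"
    and gamma: "0 < \<gamma>" "\<gamma> < 1"
    and alpha: "0 < \<alpha>" "\<alpha> < 1"
    and d_pos: "\<And>x u. d x u > 0"
    and d_sum: "(\<Sum>(x, u)\<in>UNIV. d x u) = 1"
    and greedy_max: "\<And>Q x u. Q x u \<le> Q x (greedy Q x)"
    and QA_step: "\<And>k. QA (Suc k) = sdq_step \<alpha> \<gamma> r greedy (s k) (a k) (s' k) (QA k) (QB k)"
    and QB_step: "\<And>k. QB (Suc k) = sdq_step \<alpha> \<gamma> r greedy (s k) (a k) (s' k) (QB k) (QA k)"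
    and QAL_step: "\<And>k. QAL (Suc k) = (\<lambda>x u.
          Qstar P r \<gamma> x u
          + (QAL k x u - Qstar P r \<gamma> x u)
          + \<alpha> * \<gamma> * Dop d (Pop P (Piop (greedy (Qstar P r \<gamma>)) (\<lambda>y v. QAL k y v - Qstar P r \<gamma> y v))) x u
          - \<alpha> * Dop d (\<lambda>y v. QAL k y v - Qstar P r \<gamma> y v) x u
          + \<alpha> * \<gamma> * Dop d (Pop P (\<lambda>y.
                Piop (greedy (QB k)) (\<lambda>z v. QA k z v - QB k z v) y
              - Piop (greedy (Qstar P r \<gamma>)) (\<lambda>z v. QA k z v - QB k z v) y)) x u
          + \<alpha> * noise d P r \<gamma> greedy (s k) (a k) (s' k) (QA k) (QB k) x u)"
    and QBL_step: "\<And>k. QBL (Suc k) = (\<lambda>x u.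
          Qstar P r \<gamma> x u
          + (QBL k x u - Qstar P r \<gamma> x u)
          + \<alpha> * \<gamma> * Dop d (Pop P (Piop (greedy (Qstar P r \<gamma>)) (\<lambda>y v. QBL k y v - Qstar P r \<gamma> y v))) x u
          - \<alpha> * Dop d (\<lambda>y v. QBL k y v - Qstar P r \<gamma> y v) x u
          + \<alpha> * \<gamma> * Dop d (Pop P (\<lambda>y.
                Piop (greedy (Qstar P r \<gamma>)) (\<lambda>z v. QA k z v - QB k z v) y
              - Piop (greedy (QA k)) (\<lambda>z v. QA k z v - QB k z v) y)) x u
          + \<alpha> * noise d P r \<gamma> greedy (s k) (a k) (s' k) (QB k) (QA k) x u)"
    and init_A: "(\<lambda>x u. QAL 0 x u - Qstar P r \<gamma> x u) \<le> (\<lambda>x u. QA 0 x u - Qstar P r \<gamma> x u)"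
    and init_B: "(\<lambda>x u. QBL 0 x u - Qstar P r \<gamma> x u) \<le> (\<lambda>x u. QB 0 x u - Qstar P r \<gamma> x u)"
  shows "\<forall>k. (\<lambda>x u. QAL k x u - Qstar P r \<gamma> x u) \<le> (\<lambda>x u. QA k x u - Qstar P r \<gamma> x u)
           \<and> (\<lambda>x u. QBL k x u - Qstar P r \<gamma> x u) \<le> (\<lambda>x u. QB k x u - Qstar P r \<gamma> x u)"
proof -
  let ?q = "Qstar P r \<gamma>"
  have bellman: "?q x u = Rexp P r x u + \<gamma> * Pop P (Piop (greedy ?q) ?q) x u" for x u
    using P_nonneg P_sum gamma greedy_max by (intro Qstar_bellman_greedy) auto
  have alpha_d: "\<alpha> * d x u \<le> 1" for x u
  proof -
    have "(\<lambda>(x, u). d x u) (x, u) \<le> (\<Sum>(x, u)\<in>UNIV. d x u)"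
      by (rule member_le_sum) (auto simp: less_imp_le d_pos)
    then show ?thesis
      using alpha d_sum d_pos[of x u] by (simp add: mult_le_one)
  qed
  have QAL_lower: "QAL (Suc k) = sdq_lower_step d P r \<gamma> \<alpha> greedy ?q (s k) (a k) (s' k) (QAL k) (QA k) (QB k)" for k
    by (simp add: QAL_step sdq_lower_step_def)
  have QBL_lower: "QBL (Suc k) = sdq_lower_step d P r \<gamma> \<alpha> greedy ?q (s k) (a k) (s' k) (QBL k) (QB k) (QA k)" for k
    by (simp add: QBL_step sdq_lower_step_def Piop_def algebra_simps)
  have "QAL k \<le> QA k \<and> QBL k \<le> QB k" for k
  proof (induction k)
    case 0
    show ?case using init_A init_B by (simp add: le_fun_def)
  next
    case (Suc k)
    then show ?case
      unfolding QA_step QB_step QAL_lower QBL_lower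
      using P_nonneg alpha gamma d_pos alpha_d greedy_max bellman
      by (intro conjI sdq_lower_step_le_sdq_step) (auto simp: less_imp_le)
  qed
  then show ?thesis
    by (simp add: le_fun_def)
qed

end
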